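(* Let $k \ge 1$ be an integer. Let $P_1$ and $P_2$ be disjoint piles of coins, each of size $2^k$, and suppose exactly one coin of $P_1$ and exactly one coin of $P_2$ are counterfeit (all other coins genuine). Then there is an adaptive strategy using at most $k+1$ weighings on a 5-way scale (using only coins of $P_1 \cup P_2$) that determines both counterfeit coins.
   Context: Coins look identical; all genuine coins have one common weight, all counterfeit coins have one common weight strictly less than the genuine weight. A weighing places two disjoint sets of coins of equal cardinality on the left and right pans. Let $d$ = (number of counterfeit coins on the left pan) $-$ (number of counterfeit coins on the right pan). A 5-way scale reports MUCH LESS if $d \ge 2$, LESS if $d = 1$, EQUAL if $d = 0$, MORE if $d = -1$, MUCH MORE if $d \le -2$. A strategy chooses each weighing possibly depending on previous outcomes; it determines the counterfeit coins if the sequence of outcomes uniquely identifies them. *)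

theory Defs
  imports Main
begin

datatype outcome = MuchLess | Less | Equal | More | MuchMore

definition weigh :: "'a set \<Rightarrow> 'a set \<Rightarrow> 'a set \<Rightarrow> outcome" where
  "weigh C L R =
     (let d = int (card (L \<inter> C)) - int (card (R \<inter> C)) in
      if d \<ge> 2 then MuchLess
      else if d = 1 then Less
      else if d = 0 then Equal
      else if d = -1 then More
      else MuchMore)"

datatype 'a strat = Stop | Weigh "'a set" "'a set" "outcome \<Rightarrow> 'a strat"

primrec valid :: "'a set \<Rightarrow> 'a strat \<Rightarrow> nat \<Rightarrow> bool" where
  "valid U Stop = (\<lambda>n. True)"
| "valid U (Weigh L R f) =
     (\<lambda>n. 0 < n \<and> L \<subseteq> U \<and> R \<subseteq> U \<and> L \<inter> R = {} \<and> card L = card R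
          \<and> (\<forall>r. valid U (f r) (n - 1)))"

primrec outcomes :: "'a strat \<Rightarrow> 'a set \<Rightarrow> outcome list" where
  "outcomes Stop = (\<lambda>C. [])"
| "outcomes (Weigh L R f) = (\<lambda>C. weigh C L R # outcomes (f (weigh C L R)) C)"

end

theory Submission
  imports Defs
begin

text \<open>Induct on \<open>j\<close> for two families of candidate sets at once, all factors of size \<open>2^j\<close>
  and all identified by \<open>j + 1\<close> weighings: products \<open>A \<times> B\<close>, and unions
  \<open>A1 \<times> B1 \<union> A2 \<times> B2\<close> of two products on disjoint coins. Halve every factor. For \<open>A \<times> B\<close>,
  weighing \<open>A1 \<union> B1\<close> against \<open>A2 \<union> B2\<close> reads \<open>d = 2\<close> on \<open>A1 \<times> B1\<close>, \<open>d = -2\<close> on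
  \<open>A2 \<times> B2\<close> and \<open>d = 0\<close> on the two cross products. For the union, weighing
  \<open>A11 \<union> B11 \<union> A21\<close> against \<open>A12 \<union> A22 \<union> B22\<close> sorts the eight quarter products into the
  five readings, each class being a product or a union of two products of half size.\<close>

definition reading :: "int \<Rightarrow> outcome" where
  "reading d = (if d \<ge> 2 then MuchLess
      else if d = 1 then Less
      else if d = 0 then Equal
      else if d = -1 then More
      else MuchMore)"

definition side :: "'a set \<Rightarrow> 'a set \<Rightarrow> 'a \<Rightarrow> int" where
  "side L R x = (if x \<in> L then 1 else if x \<in> R then -1 else 0)"

lemma weigh_pair:
  assumes "a \<noteq> b" and "L \<inter> R = {}"
  shows "weigh {a, b} L R = reading (side L R a + side L R b)"
proof -
  have card_pair: "int (card (M \<inter> {a, b})) = of_bool (a \<in> M) + of_bool (b \<in> M)" for M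
    using assms(1) by (cases "a \<in> M"; cases "b \<in> M") (auto simp: Int_insert_right)
  have "int (card (L \<inter> {a, b})) - int (card (R \<inter> {a, b})) = side L R a + side L R b"
    using assms(2) unfolding card_pair side_def by auto
  then show ?thesis
    unfolding weigh_def reading_def Let_def by presburger
qed

definition solvable :: "'a set \<Rightarrow> nat \<Rightarrow> ('a \<times> 'a) set \<Rightarrow> bool" where
  "solvable U n X \<longleftrightarrow> (\<exists>S. valid U S n \<and> inj_on (\<lambda>(a, b). outcomes S {a, b}) X)"

lemma valid_mono: "valid U S n \<Longrightarrow> U \<subseteq> V \<Longrightarrow> valid V S n"
  by (induction S arbitrary: n) auto

lemma solvable_mono: "solvable U n X \<Longrightarrow> U \<subseteq> V \<Longrightarrow> Y \<subseteq> X \<Longrightarrow> solvable V n Y"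
  unfolding solvable_def by (meson inj_on_subset valid_mono)

lemma solvable_subsingleton: "X \<subseteq> {p} \<Longrightarrow> solvable U n X"
  unfolding solvable_def by (intro exI[of _ Stop]) (auto simp: inj_on_def)

lemma solvable_Weigh:
  assumes "L \<subseteq> U" "R \<subseteq> U" "L \<inter> R = {}" "card L = card R"
    and sub: "\<And>r. solvable U n (Y r)"
    and classify: "\<And>a b. (a, b) \<in> X \<Longrightarrow> (a, b) \<in> Y (weigh {a, b} L R)"
  shows "solvable U (Suc n) X"
proof -
  obtain f where f: "\<And>r. valid U (f r) n" "\<And>r. inj_on (\<lambda>(a, b). outcomes (f r) {a, b}) (Y r)"
    using sub unfolding solvable_def by metis
  have "inj_on (\<lambda>(a, b). outcomes (Weigh L R f) {a, b}) X"
  proof (rule inj_onI, clarify)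
    fix a b a' b'
    assume p: "(a, b) \<in> X" and q: "(a', b') \<in> X"
      and eq: "outcomes (Weigh L R f) {a, b} = outcomes (Weigh L R f) {a', b'}"
    define r where "r = weigh {a, b} L R"
    from eq have r': "weigh {a', b'} L R = r"
      by (simp add: r_def)
    with eq have tail: "outcomes (f r) {a, b} = outcomes (f r) {a', b'}"
      by (simp add: r_def)
    have "(a, b) \<in> Y r" "(a', b') \<in> Y r"
      using classify[OF p] classify[OF q] by (simp_all add: r_def r')
    with tail show "a = a' \<and> b = b'"
      using inj_onD[OF f(2)] by fastforce
  qed
  moreover have "valid U (Weigh L R f) (Suc n)"
    using assms(1-4) f(1) by simp
  ultimately show ?thesis
    unfolding solvable_def by blast
qed

lemma obtain_halves:
  assumes "finite A" and "card A = m + n"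
  obtains A1 A2 where "A = A1 \<union> A2" "A1 \<inter> A2 = {}" "card A1 = m" "card A2 = n"
proof -
  obtain A1 where A1: "A1 \<subseteq> A" "card A1 = m"
    using obtain_subset_with_card_n[of m A] assms(2) by auto
  have "card (A - A1) = n"
    using A1 assms by (simp add: card_Diff_subset finite_subset)
  then show ?thesis
    using that[of A1 "A - A1"] A1 by blast
qed

lemma solvable_two_pairs:
  assumes "a1 \<noteq> a2" and "{a1, a2} \<inter> {b1, b2} = {}"
  shows "solvable {a1, a2} (Suc n) {(a1, b1), (a2, b2)}"
proof (rule solvable_Weigh[where L = "{a1}" and R = "{a2}" and Y = "\<lambda>r. if r = Less then {(a1, b1)} else {(a2, b2)}"])
  fix a b
  assume "(a, b) \<in> {(a1, b1), (a2, b2)}"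
  then show "(a, b) \<in> (if weigh {a, b} {a1} {a2} = Less then {(a1, b1)} else {(a2, b2)})"
    using assms by (auto simp: weigh_pair side_def reading_def)
qed (use assms in \<open>auto intro: solvable_subsingleton\<close>)

context
  fixes m n :: nat
  assumes product: "\<And>A B :: 'a set. A \<inter> B = {} \<Longrightarrow> card A = m \<Longrightarrow> card B = m \<Longrightarrow>
      solvable (A \<union> B) n (A \<times> B)"
    and two_products: "\<And>A1 A2 B1 B2 :: 'a set. A1 \<inter> A2 = {} \<Longrightarrow> B1 \<inter> B2 = {} \<Longrightarrow>
      (A1 \<union> A2) \<inter> (B1 \<union> B2) = {} \<Longrightarrow>
      card A1 = m \<Longrightarrow> card A2 = m \<Longrightarrow> card B1 = m \<Longrightarrow> card B2 = m \<Longrightarrow>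
      solvable (A1 \<union> A2 \<union> B1 \<union> B2) n (A1 \<times> B1 \<union> A2 \<times> B2)"
begin

lemma solvable_product_step:
  fixes A B :: "'a set"
  assumes "finite A" "finite B" "A \<inter> B = {}" "card A = 2 * m" "card B = 2 * m"
  shows "solvable (A \<union> B) (Suc n) (A \<times> B)"
proof -
  obtain A1 A2 where A: "A = A1 \<union> A2" "A1 \<inter> A2 = {}" "card A1 = m" "card A2 = m"
    using obtain_halves[OF \<open>finite A\<close>, of m m] assms(4) by auto
  obtain B1 B2 where B: "B = B1 \<union> B2" "B1 \<inter> B2 = {}" "card B1 = m" "card B2 = m"
    using obtain_halves[OF \<open>finite B\<close>, of m m] assms(5) by auto
  have fin: "finite A1" "finite A2" "finite B1" "finite B2"
    using A(1) B(1) assms(1,2) by auto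
  have disj: "A1 \<inter> B1 = {}" "A1 \<inter> B2 = {}" "A2 \<inter> B1 = {}" "A2 \<inter> B2 = {}"
    using A(1) B(1) assms(3) by auto
  have lift: "solvable V n Z \<Longrightarrow> V \<subseteq> A \<union> B \<Longrightarrow> solvable (A \<union> B) n Z" for V Z
    using solvable_mono by blast
  define Y where "Y = case_outcome (A1 \<times> B1) {} (A1 \<times> B2 \<union> A2 \<times> B1) {} (A2 \<times> B2)"
  show ?thesis
  proof (rule solvable_Weigh[where L = "A1 \<union> B1" and R = "A2 \<union> B2" and Y = Y])
    show "card (A1 \<union> B1) = card (A2 \<union> B2)"
      using A B fin disj by (simp add: card_Un_disjoint)
  next
    fix r
    show "solvable (A \<union> B) n (Y r)"
      by (cases r; simp only: Y_def outcome.case;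
          rule lift[OF product] lift[OF two_products] solvable_subsingleton)
        (use A B disj in auto)
  next
    fix a b
    assume ab: "(a, b) \<in> A \<times> B"
    have "a \<noteq> b" "(A1 \<union> B1) \<inter> (A2 \<union> B2) = {}"
      using ab A B assms(3) by auto
    moreover have "side (A1 \<union> B1) (A2 \<union> B2) a = (if a \<in> A1 then 1 else -1)"
      "side (A1 \<union> B1) (A2 \<union> B2) b = (if b \<in> B1 then 1 else -1)"
      using ab A B assms(3) by (auto simp: side_def)
    ultimately show "(a, b) \<in> Y (weigh {a, b} (A1 \<union> B1) (A2 \<union> B2))"
      using ab A B by (auto simp: weigh_pair reading_def Y_def)
  qed (use A B assms(3) in auto)
qed

lemma solvable_two_products_step:
  fixes A1 A2 B1 B2 :: "'a set"
  assumes "finite A1" "finite A2" "finite B1" "finite B2"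
    and "A1 \<inter> A2 = {}" "B1 \<inter> B2 = {}" "(A1 \<union> A2) \<inter> (B1 \<union> B2) = {}"
    and "card A1 = 2 * m" "card A2 = 2 * m" "card B1 = 2 * m" "card B2 = 2 * m"
  shows "solvable (A1 \<union> A2 \<union> B1 \<union> B2) (Suc n) (A1 \<times> B1 \<union> A2 \<times> B2)"
proof -
  obtain A11 A12 where A1: "A1 = A11 \<union> A12" "A11 \<inter> A12 = {}" "card A11 = m" "card A12 = m"
    using obtain_halves[OF assms(1), of m m] assms(8) by auto
  obtain A21 A22 where A2: "A2 = A21 \<union> A22" "A21 \<inter> A22 = {}" "card A21 = m" "card A22 = m"
    using obtain_halves[OF assms(2), of m m] assms(9) by auto
  obtain B11 B12 where B1: "B1 = B11 \<union> B12" "B11 \<inter> B12 = {}" "card B11 = m" "card B12 = m"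
    using obtain_halves[OF assms(3), of m m] assms(10) by auto
  obtain B21 B22 where B2: "B2 = B21 \<union> B22" "B21 \<inter> B22 = {}" "card B21 = m" "card B22 = m"
    using obtain_halves[OF assms(4), of m m] assms(11) by auto
  note parts = A1 A2 B1 B2 assms(5-7)
  let ?U = "A1 \<union> A2 \<union> B1 \<union> B2"
  define L where "L = A11 \<union> B11 \<union> A21"
  define R where "R = A12 \<union> A22 \<union> B22"
  define Y where "Y = case_outcome (A11 \<times> B11) (A11 \<times> B12 \<union> A21 \<times> B21)
    (A12 \<times> B11 \<union> A21 \<times> B22) (A12 \<times> B12 \<union> A22 \<times> B21) (A22 \<times> B22)"
  have lift: "solvable V n Z \<Longrightarrow> V \<subseteq> ?U \<Longrightarrow> solvable ?U n Z" for V Z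
    using solvable_mono by blast
  have fin: "finite A11" "finite A12" "finite A21" "finite A22"
    "finite B11" "finite B12" "finite B21" "finite B22"
    using A1(1) A2(1) B1(1) B2(1) assms(1-4) by auto
  have "A11 \<inter> B11 = {}" "(A11 \<union> B11) \<inter> A21 = {}" "A12 \<inter> A22 = {}" "(A12 \<union> A22) \<inter> B22 = {}"
    using parts by auto
  then have "card L = 3 * m" "card R = 3 * m"
    unfolding L_def R_def using parts fin by (simp_all add: card_Un_disjoint)
  show ?thesis
  proof (rule solvable_Weigh[where L = L and R = R and Y = Y])
    fix r
    show "solvable ?U n (Y r)"
      by (cases r; simp only: Y_def outcome.case; rule lift[OF product] lift[OF two_products])
        (use parts in auto)
  next
    fix a b
    assume ab: "(a, b) \<in> A1 \<times> B1 \<union> A2 \<times> B2"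
    have "a \<noteq> b" "L \<inter> R = {}"
      using ab parts unfolding L_def R_def by auto
    moreover have "side L R a = (if a \<in> A11 \<union> A21 then 1 else -1)"
      using ab parts unfolding L_def R_def by (auto simp: side_def)
    moreover have "side L R b = (if b \<in> B11 then 1 else if b \<in> B22 then -1 else 0)"
      using ab parts unfolding L_def R_def by (auto simp: side_def)
    ultimately show "(a, b) \<in> Y (weigh {a, b} L R)"
      using ab parts by (auto simp: weigh_pair reading_def Y_def)
  qed (use \<open>card L = 3 * m\<close> \<open>card R = 3 * m\<close> parts in \<open>auto simp: L_def R_def\<close>)
qed

end

lemma solvable_products_pow2:
  "(\<forall>A B :: 'a set. A \<inter> B = {} \<longrightarrow> card A = 2 ^ j \<longrightarrow> card B = 2 ^ j \<longrightarrow>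
      solvable (A \<union> B) (Suc j) (A \<times> B)) \<and>
   (\<forall>A1 A2 B1 B2 :: 'a set. A1 \<inter> A2 = {} \<longrightarrow> B1 \<inter> B2 = {} \<longrightarrow>
      (A1 \<union> A2) \<inter> (B1 \<union> B2) = {} \<longrightarrow>
      card A1 = 2 ^ j \<longrightarrow> card A2 = 2 ^ j \<longrightarrow> card B1 = 2 ^ j \<longrightarrow> card B2 = 2 ^ j \<longrightarrow>
      solvable (A1 \<union> A2 \<union> B1 \<union> B2) (Suc j) (A1 \<times> B1 \<union> A2 \<times> B2))"
proof (induction j)
  case 0
  have "solvable (A \<union> B) (Suc 0) (A \<times> B)" if "card A = 1" "card B = 1" for A B :: "'a set"
    using that by (auto simp: card_1_singleton_iff intro: solvable_subsingleton)
  moreover have "solvable (A1 \<union> A2 \<union> B1 \<union> B2) (Suc 0) (A1 \<times> B1 \<union> A2 \<times> B2)"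
    if disjoint: "A1 \<inter> A2 = {}" "(A1 \<union> A2) \<inter> (B1 \<union> B2) = {}"
      and "card A1 = 1" "card A2 = 1" "card B1 = 1" "card B2 = 1" for A1 A2 B1 B2 :: "'a set"
  proof -
    obtain a1 a2 b1 b2 where "A1 = {a1}" "A2 = {a2}" "B1 = {b1}" "B2 = {b2}"
      using \<open>card A1 = 1\<close> \<open>card A2 = 1\<close> \<open>card B1 = 1\<close> \<open>card B2 = 1\<close>
      by (auto simp: card_1_singleton_iff)
    with disjoint show ?thesis
      using solvable_mono[OF solvable_two_pairs[of a1 a2 b1 b2]] by auto
  qed
  ultimately show ?case
    by simp
next
  case (Suc j)
  have fin: "card X = 2 ^ Suc j \<Longrightarrow> finite X" for X :: "'a set"
    by (simp add: card_ge_0_finite)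
  note product = Suc.IH[THEN conjunct1, rule_format]
    and two_products = Suc.IH[THEN conjunct2, rule_format]
  show ?case
  proof (intro conjI allI impI)
    fix A B :: "'a set"
    assume AB: "A \<inter> B = {}" "card A = 2 ^ Suc j" "card B = 2 ^ Suc j"
    show "solvable (A \<union> B) (Suc (Suc j)) (A \<times> B)"
      by (rule solvable_product_step[OF product two_products fin[OF AB(2)] fin[OF AB(3)] AB(1)])
        (use AB in simp_all)
  next
    fix A1 A2 B1 B2 :: "'a set"
    assume AB: "A1 \<inter> A2 = {}" "B1 \<inter> B2 = {}" "(A1 \<union> A2) \<inter> (B1 \<union> B2) = {}"
      "card A1 = 2 ^ Suc j" "card A2 = 2 ^ Suc j" "card B1 = 2 ^ Suc j" "card B2 = 2 ^ Suc j"
    show "solvable (A1 \<union> A2 \<union> B1 \<union> B2) (Suc (Suc j)) (A1 \<times> B1 \<union> A2 \<times> B2)"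
      by (rule solvable_two_products_step[OF product two_products fin[OF AB(4)] fin[OF AB(5)]
            fin[OF AB(6)] fin[OF AB(7)] AB(1-3)])
        (use AB in simp_all)
  qed
qed

theorem mainTheorem5:
  fixes k :: nat and P1 P2 :: "'a set"
  assumes "k \<ge> 1"
    and "P1 \<inter> P2 = {}"
    and "finite P1" and "finite P2"
    and "card P1 = 2 ^ k" and "card P2 = 2 ^ k"
  shows "\<exists>S. valid (P1 \<union> P2) S (k + 1) \<and>
    (\<forall>a\<in>P1. \<forall>b\<in>P2. \<forall>a'\<in>P1. \<forall>b'\<in>P2.
       outcomes S {a, b} = outcomes S {a', b'} \<longrightarrow> {a, b} = {a', b'})"
proof -
  have "solvable (P1 \<union> P2) (Suc k) (P1 \<times> P2)"
    using solvable_products_pow2[of k] assms(2,5,6) by blast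
  then obtain S where valid: "valid (P1 \<union> P2) S (k + 1)"
    and inj: "inj_on (\<lambda>(a, b). outcomes S {a, b}) (P1 \<times> P2)"
    unfolding solvable_def by auto
  have "{a, b} = {a', b'}"
    if "a \<in> P1" "b \<in> P2" "a' \<in> P1" "b' \<in> P2" "outcomes S {a, b} = outcomes S {a', b'}"
    for a b a' b'
    using inj_onD[OF inj, of "(a, b)" "(a', b')"] that by simp
  with valid show ?thesis
    by blast
qed

end
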